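(* Let $n\ge2$, let $R$ be a commutative unital profinite ring, and let $G$ be a profinite group. Then $T^{\bar{\mathbb{U}}_n(R)}(G)=T^{\mathbb{U}_{n-1}(R)}(G)$.
   Context: For profinite groups $\mathbb{U}$ and $G$, $T^{\mathbb{U}}(G)$ denotes the intersection of the kernels of all continuous homomorphisms $G\to\mathbb{U}$. $\mathbb{U}_n(R)$ is the group of unipotent upper-triangular $(n+1)\times(n+1)$ matrices over $R$; $R^+$ embeds centrally in it via $r\mapsto I_{n+1}+rE_{1,n+1}$, and $\bar{\mathbb{U}}_n(R)=\mathbb{U}_n(R)/R^+$. *)

theory Defs
  imports "HOL-Analysis.Analysis" "HOL-Algebra.Algebra"
begin

definition totally_disconnected_space :: "'a topology \<Rightarrow> bool" where
  "totally_disconnected_space Y \<longleftrightarrow>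
     (\<forall>x \<in> topspace Y. connected_component_of Y x = (\<lambda>y. y = x))"

definition profinite_space :: "'a topology \<Rightarrow> bool" where
  "profinite_space Y \<longleftrightarrow> compact_space Y \<and> Hausdorff_space Y \<and> totally_disconnected_space Y"

definition topological_group :: "('g, 'b) monoid_scheme \<Rightarrow> 'g topology \<Rightarrow> bool" where
  "topological_group G T \<longleftrightarrow> group G \<and> topspace T = carrier G \<and>
     continuous_map (prod_topology T T) T (\<lambda>(x, y). x \<otimes>\<^bsub>G\<^esub> y) \<and>
     continuous_map T T (\<lambda>x. inv\<^bsub>G\<^esub> x)"

definition profinite_group :: "('g, 'b) monoid_scheme \<Rightarrow> 'g topology \<Rightarrow> bool" where
  "profinite_group G T \<longleftrightarrow> topological_group G T \<and> profinite_space T"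

definition profinite_ring :: "('r::comm_ring_1) topology \<Rightarrow> bool" where
  "profinite_ring TR \<longleftrightarrow> topspace TR = UNIV \<and>
     continuous_map (prod_topology TR TR) TR (\<lambda>(x, y). x + y) \<and>
     continuous_map TR TR uminus \<and>
     continuous_map (prod_topology TR TR) TR (\<lambda>(x, y). x * y) \<and>
     profinite_space TR"

definition quotient_topology :: "'a topology \<Rightarrow> ('a \<Rightarrow> 'b) \<Rightarrow> 'b topology" where
  "quotient_topology Y f =
     topology (\<lambda>U. U \<subseteq> f ` topspace Y \<and> openin Y {x \<in> topspace Y. f x \<in> U})"

text \<open>U_n(R): (n+1)x(n+1) unipotent upper triangular matrices over R, with row
  and column indices 0..n; entries outside that range are 0.\<close>
definition unitri_carrier :: "nat \<Rightarrow> (nat \<times> nat \<Rightarrow> 'r::comm_ring_1) set" where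
  "unitri_carrier n = {M. \<forall>i j. (i = j \<and> i \<le> n \<longrightarrow> M (i, j) = 1) \<and>
                                 (\<not> (i < j \<and> j \<le> n) \<and> \<not> (i = j \<and> i \<le> n) \<longrightarrow> M (i, j) = 0)}"

definition Unitri :: "nat \<Rightarrow> (nat \<times> nat \<Rightarrow> 'r::comm_ring_1) monoid" where
  "Unitri n = \<lparr> carrier = unitri_carrier n,
      mult = (\<lambda>A B. \<lambda>(i, j). if i \<le> n \<and> j \<le> n then (\<Sum>k\<le>n. A (i, k) * B (k, j)) else 0),
      one = (\<lambda>(i, j). if i = j \<and> i \<le> n then 1 else 0) \<rparr>"

definition Unitri_top :: "'r topology \<Rightarrow> nat \<Rightarrow> (nat \<times> nat \<Rightarrow> 'r::comm_ring_1) topology" where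
  "Unitri_top TR n = subtopology (product_topology (\<lambda>_. TR) UNIV) (unitri_carrier n)"

text \<open>The central copy of R^+: r \<mapsto> I + r E_{1,n+1} (here entry (0,n)).\<close>
definition central_embed :: "nat \<Rightarrow> 'r \<Rightarrow> (nat \<times> nat \<Rightarrow> 'r::comm_ring_1)" where
  "central_embed n r = (\<one>\<^bsub>Unitri n\<^esub>)((0, n) := r)"

definition central_sub :: "nat \<Rightarrow> (nat \<times> nat \<Rightarrow> 'r::comm_ring_1) set" where
  "central_sub n = range (central_embed n)"

definition Unitri_bar :: "nat \<Rightarrow> (nat \<times> nat \<Rightarrow> 'r::comm_ring_1) set monoid" where
  "Unitri_bar n = Unitri n Mod central_sub n"

definition Unitri_bar_top :: "'r topology \<Rightarrow> nat \<Rightarrow> (nat \<times> nat \<Rightarrow> 'r::comm_ring_1) set topology" where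
  "Unitri_bar_top TR n = quotient_topology (Unitri_top TR n) (\<lambda>M. central_sub n #>\<^bsub>Unitri n\<^esub> M)"

definition T_kernel :: "('g, 'a) monoid_scheme \<Rightarrow> 'g topology \<Rightarrow>
                        ('u, 'c) monoid_scheme \<Rightarrow> 'u topology \<Rightarrow> 'g set" where
  "T_kernel G TG U TU = carrier G \<inter>
     \<Inter> {kernel G U f | f. f \<in> hom G U \<and> continuous_map TG TU f}"

end

theory Submission
  imports Defs
begin

text \<open>Padding a matrix of \<open>U\<^sub>n\<^sub>-\<^sub>1(R)\<close> by a last row and column of the identity and
  passing to the quotient by the corner \<open>R\<^sup>+\<close> embeds \<open>U\<^sub>n\<^sub>-\<^sub>1(R)\<close> into \<open>\<bar>U\<^sub>n(R)\<close>.
  Conversely the upper-left and the lower-right \<open>n \<times> n\<close> blocks of a matrix of \<open>U\<^sub>n(R)\<close> are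
  homomorphisms onto \<open>U\<^sub>n\<^sub>-\<^sub>1(R)\<close> that do not see the corner entry, so they factor through
  \<open>\<bar>U\<^sub>n(R)\<close>; as every entry other than the corner lies in one of the two blocks,
  together they embed \<open>\<bar>U\<^sub>n(R)\<close> into \<open>U\<^sub>n\<^sub>-\<^sub>1(R)\<^sup>2\<close>. All these maps are continuous, and a
  continuous embedding \<open>U \<rightarrow> V\<close> (or \<open>U \<rightarrow> V\<^sup>2\<close>) gives \<open>T\<^sup>V(G) \<subseteq> T\<^sup>U(G)\<close>.\<close>

section \<open>Comparing kernels of continuous homomorphisms\<close>

lemma T_kernel_subset_if_jointly_injective:
  assumes hom: "\<phi> \<in> hom V U" "\<psi> \<in> hom V U"
    and cont: "continuous_map TV TU \<phi>" "continuous_map TV TU \<psi>"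
    and inj: "\<And>v. v \<in> carrier V \<Longrightarrow> \<phi> v = \<one>\<^bsub>U\<^esub> \<Longrightarrow> \<psi> v = \<one>\<^bsub>U\<^esub> \<Longrightarrow> v = \<one>\<^bsub>V\<^esub>"
  shows "T_kernel G TG U TU \<subseteq> T_kernel G TG V TV"
proof
  fix x assume x: "x \<in> T_kernel G TG U TU"
  then have xG: "x \<in> carrier G" by (simp add: T_kernel_def)
  have in_kernel: "f x = \<one>\<^bsub>U\<^esub>" if "f \<in> hom G U" "continuous_map TG TU f" for f
    using x that unfolding T_kernel_def kernel_def by blast
  show "x \<in> T_kernel G TG V TV"
    unfolding T_kernel_def
  proof (intro IntI InterI xG)
    fix K assume "K \<in> {kernel G V g |g. g \<in> hom G V \<and> continuous_map TG TV g}"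
    then obtain g where K: "K = kernel G V g" and g: "g \<in> hom G V" "continuous_map TG TV g"
      by blast
    have "\<phi> \<circ> g \<in> hom G U" "\<psi> \<circ> g \<in> hom G U"
      using g(1) hom by (blast intro: hom_compose)+
    moreover have "continuous_map TG TU (\<phi> \<circ> g)" "continuous_map TG TU (\<psi> \<circ> g)"
      using g(2) cont by (blast intro: continuous_map_compose)+
    ultimately have "\<phi> (g x) = \<one>\<^bsub>U\<^esub>" "\<psi> (g x) = \<one>\<^bsub>U\<^esub>"
      using in_kernel by fastforce+
    then show "x \<in> K"
      using inj[OF hom_in_carrier[OF g(1) xG]] xG by (simp add: K kernel_def)
  qed
qed

lemma T_kernel_subset_if_injective:
  assumes "\<phi> \<in> hom V U" "continuous_map TV TU \<phi>"
    and "\<And>v. v \<in> carrier V \<Longrightarrow> \<phi> v = \<one>\<^bsub>U\<^esub> \<Longrightarrow> v = \<one>\<^bsub>V\<^esub>"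
  shows "T_kernel G TG U TU \<subseteq> T_kernel G TG V TV"
  by (rule T_kernel_subset_if_jointly_injective[OF assms(1,1,2,2)]) (rule assms(3))

section \<open>Quotient topology\<close>

lemma istopology_quotient:
  "istopology (\<lambda>U. U \<subseteq> q ` topspace Y \<and> openin Y {x \<in> topspace Y. q x \<in> U})"
  unfolding istopology_def
proof (rule conjI; intro allI impI)
  fix S T
  assume "S \<subseteq> q ` topspace Y \<and> openin Y {x \<in> topspace Y. q x \<in> S}"
    and "T \<subseteq> q ` topspace Y \<and> openin Y {x \<in> topspace Y. q x \<in> T}"
  moreover have "{x \<in> topspace Y. q x \<in> S \<inter> T}
      = {x \<in> topspace Y. q x \<in> S} \<inter> {x \<in> topspace Y. q x \<in> T}" by auto
  ultimately show "S \<inter> T \<subseteq> q ` topspace Y \<and> openin Y {x \<in> topspace Y. q x \<in> S \<inter> T}"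
    by auto
next
  fix K assume K: "\<forall>U\<in>K. U \<subseteq> q ` topspace Y \<and> openin Y {x \<in> topspace Y. q x \<in> U}"
  have "{x \<in> topspace Y. q x \<in> \<Union>K} = (\<Union>U\<in>K. {x \<in> topspace Y. q x \<in> U})" by auto
  then show "\<Union>K \<subseteq> q ` topspace Y \<and> openin Y {x \<in> topspace Y. q x \<in> \<Union>K}"
    using K by auto
qed

lemma openin_quotient_topology:
  "openin (quotient_topology Y q) U \<longleftrightarrow> U \<subseteq> q ` topspace Y \<and> openin Y {x \<in> topspace Y. q x \<in> U}"
  by (simp add: quotient_topology_def istopology_quotient)

lemma topspace_quotient_topology: "topspace (quotient_topology Y q) = q ` topspace Y"
proof (rule antisym)
  show "topspace (quotient_topology Y q) \<subseteq> q ` topspace Y"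
    using openin_quotient_topology[of Y q "topspace (quotient_topology Y q)"] by simp
  have "{x \<in> topspace Y. q x \<in> q ` topspace Y} = topspace Y" by auto
  then show "q ` topspace Y \<subseteq> topspace (quotient_topology Y q)"
    by (intro openin_subset) (simp add: openin_quotient_topology)
qed

lemma continuous_map_to_quotient_topology: "continuous_map Y (quotient_topology Y q) q"
  unfolding continuous_map_def topspace_quotient_topology by (auto simp: openin_quotient_topology)

lemma continuous_map_from_quotient_topology:
  assumes "continuous_map Y Z (\<lambda>x. h (q x))"
  shows "continuous_map (quotient_topology Y q) Z h"
  unfolding continuous_map_def topspace_quotient_topology
proof (intro conjI allI impI)
  show "h \<in> q ` topspace Y \<rightarrow> topspace Z"
    using assms by (auto simp: continuous_map_def)
  fix U assume "openin Z U"
  moreover have "{x \<in> topspace Y. q x \<in> {y \<in> q ` topspace Y. h y \<in> U}} = {x \<in> topspace Y. h (q x) \<in> U}"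
    by auto
  ultimately show "openin (quotient_topology Y q) {y \<in> q ` topspace Y. h y \<in> U}"
    using assms by (simp add: openin_quotient_topology continuous_map_def)
qed

lemma Unitri_mult_apply:
  "(A \<otimes>\<^bsub>Unitri n\<^esub> B) (i, j) = (if i \<le> n \<and> j \<le> n then \<Sum>k\<le>n. A (i, k) * B (k, j) else 0)"
  by (simp add: Unitri_def)

lemma Unitri_one_apply: "\<one>\<^bsub>Unitri n\<^esub> (i, j) = (if i = j \<and> i \<le> n then 1 else 0)"
  by (simp add: Unitri_def)

lemma carrier_Unitri: "carrier (Unitri n) = unitri_carrier n"
  by (simp add: Unitri_def)

lemma unitri_carrier_entry:
  "A \<in> unitri_carrier n \<Longrightarrow> \<not> (i < j \<and> j \<le> n) \<Longrightarrow> A (i, j) = (if i = j \<and> i \<le> n then 1 else 0)"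
  by (auto simp: unitri_carrier_def)

lemma unitri_carrier_product_term_zero:
  "A \<in> unitri_carrier n \<Longrightarrow> B \<in> unitri_carrier n \<Longrightarrow> k \<le> n \<Longrightarrow> \<not> (i \<le> k \<and> k \<le> j)
    \<Longrightarrow> A (i, k) * B (k, j) = 0"
  by (cases "k < i") (auto simp: unitri_carrier_entry)

lemma Unitri_mult_closed:
  assumes A: "A \<in> unitri_carrier n" and B: "B \<in> unitri_carrier n"
  shows "A \<otimes>\<^bsub>Unitri n\<^esub> B \<in> unitri_carrier n"
proof -
  have diagonal: "(\<Sum>k\<le>n. A (i, k) * B (k, i)) = 1" if "i \<le> n" for i
  proof -
    have "(\<Sum>k\<le>n. A (i, k) * B (k, i)) = A (i, i) * B (i, i) + (\<Sum>k\<in>{..n} - {i}. A (i, k) * B (k, i))"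
      using that by (simp add: sum.remove)
    also have "(\<Sum>k\<in>{..n} - {i}. A (i, k) * B (k, i)) = 0"
      by (rule sum.neutral) (auto intro!: unitri_carrier_product_term_zero[OF A B])
    finally show ?thesis
      using A B that by (simp add: unitri_carrier_entry)
  qed
  have below_diagonal: "(\<Sum>k\<le>n. A (i, k) * B (k, j)) = 0" if "j < i" for i j
    by (rule sum.neutral) (use that in \<open>auto intro!: unitri_carrier_product_term_zero[OF A B]\<close>)
  show ?thesis
    unfolding unitri_carrier_def by (auto simp: Unitri_mult_apply diagonal below_diagonal)
qed

lemma Unitri_one_mult: "A \<in> unitri_carrier n \<Longrightarrow> \<one>\<^bsub>Unitri n\<^esub> \<otimes>\<^bsub>Unitri n\<^esub> A = A"
  by (auto simp: fun_eq_iff Unitri_mult_apply Unitri_one_apply unitri_carrier_entry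
      if_distrib[where f = "\<lambda>x. x * _"] cong: if_cong)

lemma Unitri_mult_upd_corner_left:
  assumes B: "B \<in> unitri_carrier n" and n: "0 < n"
  shows "A((0, n) := x) \<otimes>\<^bsub>Unitri n\<^esub> B
    = (A \<otimes>\<^bsub>Unitri n\<^esub> B)((0, n) := (A \<otimes>\<^bsub>Unitri n\<^esub> B) (0, n) + (x - A (0, n)))"
proof (rule ext, clarify)
  fix i j
  show "(A((0, n) := x) \<otimes>\<^bsub>Unitri n\<^esub> B) (i, j)
    = ((A \<otimes>\<^bsub>Unitri n\<^esub> B)((0, n) := (A \<otimes>\<^bsub>Unitri n\<^esub> B) (0, n) + (x - A (0, n)))) (i, j)"
  proof (cases "i = 0 \<and> j \<le> n")
    case True
    have "(\<Sum>k\<le>n. (A((0, n) := x)) (0, k) * B (k, j))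
        = (\<Sum>k\<le>n. A (0, k) * B (k, j) + (if k = n then (x - A (0, n)) * B (n, j) else 0))"
      by (rule sum.cong) (auto simp: algebra_simps)
    also have "\<dots> = (\<Sum>k\<le>n. A (0, k) * B (k, j)) + (x - A (0, n)) * B (n, j)"
      by (simp add: sum.distrib)
    finally show ?thesis
      using True B n by (auto simp: Unitri_mult_apply unitri_carrier_entry)
  qed (auto simp: Unitri_mult_apply)
qed

lemma Unitri_mult_upd_corner_right:
  assumes A: "A \<in> unitri_carrier n" and n: "0 < n"
  shows "A \<otimes>\<^bsub>Unitri n\<^esub> B((0, n) := y)
    = (A \<otimes>\<^bsub>Unitri n\<^esub> B)((0, n) := (A \<otimes>\<^bsub>Unitri n\<^esub> B) (0, n) + (y - B (0, n)))"
proof (rule ext, clarify)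
  fix i j
  show "(A \<otimes>\<^bsub>Unitri n\<^esub> B((0, n) := y)) (i, j)
    = ((A \<otimes>\<^bsub>Unitri n\<^esub> B)((0, n) := (A \<otimes>\<^bsub>Unitri n\<^esub> B) (0, n) + (y - B (0, n)))) (i, j)"
  proof (cases "j = n \<and> i \<le> n")
    case True
    have "(\<Sum>k\<le>n. A (i, k) * (B((0, n) := y)) (k, n))
        = (\<Sum>k\<le>n. A (i, k) * B (k, n) + (if k = 0 then A (i, 0) * (y - B (0, n)) else 0))"
      by (rule sum.cong) (auto simp: algebra_simps)
    also have "\<dots> = (\<Sum>k\<le>n. A (i, k) * B (k, n)) + A (i, 0) * (y - B (0, n))"
      by (simp add: sum.distrib)
    finally show ?thesis
      using True A n by (auto simp: Unitri_mult_apply unitri_carrier_entry)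
  qed (auto simp: Unitri_mult_apply)
qed

section \<open>Cosets of the corner subgroup\<close>

definition corner_class :: "nat \<Rightarrow> (nat \<times> nat \<Rightarrow> 'r) \<Rightarrow> (nat \<times> nat \<Rightarrow> 'r) set" where
  "corner_class n A = {D. \<forall>p. p \<noteq> (0, n) \<longrightarrow> D p = A p}"

lemma corner_class_iff: "D \<in> corner_class n A \<longleftrightarrow> D = A((0, n) := D (0, n))"
  by (auto simp: corner_class_def fun_eq_iff)

lemma corner_class_refl: "A \<in> corner_class n A"
  by (simp add: corner_class_def)

lemma corner_class_eq: "D \<in> corner_class n A \<Longrightarrow> corner_class n D = corner_class n A"
  by (auto simp: corner_class_def)

lemma corner_class_subset_carrier:
  assumes n: "0 < n" and A: "A \<in> unitri_carrier n"
  shows "corner_class n A \<subseteq> unitri_carrier n"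
proof
  fix D assume D: "D \<in> corner_class n A"
  show "D \<in> unitri_carrier n"
    unfolding unitri_carrier_def mem_Collect_eq
  proof (intro allI)
    fix i j
    show "(i = j \<and> i \<le> n \<longrightarrow> D (i, j) = 1) \<and> (\<not> (i < j \<and> j \<le> n) \<and> \<not> (i = j \<and> i \<le> n) \<longrightarrow> D (i, j) = 0)"
    proof (cases "(i, j) = (0, n)")
      case False
      then have "D (i, j) = A (i, j)"
        using D unfolding corner_class_def by blast
      moreover have "(i = j \<and> i \<le> n \<longrightarrow> A (i, j) = 1) \<and>
          (\<not> (i < j \<and> j \<le> n) \<and> \<not> (i = j \<and> i \<le> n) \<longrightarrow> A (i, j) = 0)"
        using A unfolding unitri_carrier_def by blast
      ultimately show ?thesis
        by (simp only:)
    qed (use n in auto)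
  qed
qed

lemma r_coset_central_sub:
  assumes n: "0 < n" and A: "A \<in> unitri_carrier n"
  shows "central_sub n #>\<^bsub>Unitri n\<^esub> A = corner_class n A"
proof -
  have translate: "central_embed n r \<otimes>\<^bsub>Unitri n\<^esub> A = A((0, n) := A (0, n) + r)" for r
    using Unitri_mult_upd_corner_left[OF A n, of "\<one>\<^bsub>Unitri n\<^esub>" r] Unitri_one_mult[OF A] n
    by (simp add: central_embed_def Unitri_one_apply)
  show ?thesis
    unfolding r_coset_def central_sub_def
  proof (intro equalityI subsetI)
    fix D assume "D \<in> (\<Union>C\<in>range (central_embed n). {C \<otimes>\<^bsub>Unitri n\<^esub> A})"
    then show "D \<in> corner_class n A"
      by (auto simp: translate corner_class_def)
  next
    fix D assume "D \<in> corner_class n A"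
    then have "D = central_embed n (D (0, n) - A (0, n)) \<otimes>\<^bsub>Unitri n\<^esub> A"
      by (simp add: translate corner_class_iff[symmetric])
    then show "D \<in> (\<Union>C\<in>range (central_embed n). {C \<otimes>\<^bsub>Unitri n\<^esub> A})"
      by blast
  qed
qed

lemma central_sub_eq_corner_class: "central_sub n = corner_class n \<one>\<^bsub>Unitri n\<^esub>"
proof -
  have "D = central_embed n (D (0, n))" if "D \<in> corner_class n \<one>\<^bsub>Unitri n\<^esub>" for D
    using that by (simp add: central_embed_def corner_class_iff[symmetric])
  then show ?thesis
    by (auto simp: central_sub_def central_embed_def corner_class_def)
qed

lemma set_mult_corner_class:
  assumes n: "0 < n" and A: "A \<in> unitri_carrier n" and B: "B \<in> unitri_carrier n"
  shows "corner_class n A <#>\<^bsub>Unitri n\<^esub> corner_class n B = corner_class n (A \<otimes>\<^bsub>Unitri n\<^esub> B)"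
  unfolding set_mult_def
proof (intro equalityI subsetI)
  fix E assume "E \<in> (\<Union>C\<in>corner_class n A. \<Union>D\<in>corner_class n B. {C \<otimes>\<^bsub>Unitri n\<^esub> D})"
  then obtain C D where C: "C \<in> corner_class n A" and D: "D \<in> corner_class n B"
    and E: "E = C \<otimes>\<^bsub>Unitri n\<^esub> D" by blast
  have "E = A((0, n) := C (0, n)) \<otimes>\<^bsub>Unitri n\<^esub> B((0, n) := D (0, n))"
    using C D E by (metis corner_class_iff)
  also have "\<dots> = (A \<otimes>\<^bsub>Unitri n\<^esub> B((0, n) := D (0, n)))((0, n) :=
      (A \<otimes>\<^bsub>Unitri n\<^esub> B((0, n) := D (0, n))) (0, n) + (C (0, n) - A (0, n)))"
    using D corner_class_subset_carrier[OF n B]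
    by (intro Unitri_mult_upd_corner_left[OF _ n]) (metis corner_class_iff subsetD)
  also have "A \<otimes>\<^bsub>Unitri n\<^esub> B((0, n) := D (0, n))
      = (A \<otimes>\<^bsub>Unitri n\<^esub> B)((0, n) := (A \<otimes>\<^bsub>Unitri n\<^esub> B) (0, n) + (D (0, n) - B (0, n)))"
    by (rule Unitri_mult_upd_corner_right[OF A n])
  finally show "E \<in> corner_class n (A \<otimes>\<^bsub>Unitri n\<^esub> B)"
    by (simp add: corner_class_def)
next
  fix E assume E: "E \<in> corner_class n (A \<otimes>\<^bsub>Unitri n\<^esub> B)"
  define x where "x = E (0, n) - (A \<otimes>\<^bsub>Unitri n\<^esub> B) (0, n) + A (0, n)"
  have "E = A((0, n) := x) \<otimes>\<^bsub>Unitri n\<^esub> B"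
    using E Unitri_mult_upd_corner_left[OF B n, of A x] by (simp add: x_def corner_class_iff[symmetric])
  moreover have "A((0, n) := x) \<in> corner_class n A"
    by (simp add: corner_class_def)
  ultimately show "E \<in> (\<Union>C\<in>corner_class n A. \<Union>D\<in>corner_class n B. {C \<otimes>\<^bsub>Unitri n\<^esub> D})"
    using corner_class_refl[of B n] by blast
qed

lemma carrier_Unitri_bar:
  "0 < n \<Longrightarrow> carrier (Unitri_bar n) = corner_class n ` unitri_carrier n"
  by (auto simp: Unitri_bar_def carrier_FactGroup carrier_Unitri r_coset_central_sub)

lemma one_Unitri_bar: "\<one>\<^bsub>Unitri_bar n\<^esub> = corner_class n \<one>\<^bsub>Unitri n\<^esub>"
  by (simp add: Unitri_bar_def central_sub_eq_corner_class)

lemma mult_Unitri_bar: "C \<otimes>\<^bsub>Unitri_bar n\<^esub> D = C <#>\<^bsub>Unitri n\<^esub> D"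
  by (simp add: Unitri_bar_def)

lemma topspace_Unitri_top: "topspace TR = UNIV \<Longrightarrow> topspace (Unitri_top TR n) = unitri_carrier n"
  by (simp add: Unitri_top_def)

lemma continuous_map_Unitri_top_entrywise:
  assumes TR: "topspace TR = UNIV"
    and entries: "\<And>p. (\<exists>p'. \<forall>A. F A p = A p') \<or> (\<exists>c. \<forall>A. F A p = c)"
    and maps_to: "F \<in> unitri_carrier k \<rightarrow> unitri_carrier l"
  shows "continuous_map (Unitri_top TR k) (Unitri_top TR l) F"
  unfolding Unitri_top_def continuous_map_in_subtopology continuous_map_componentwise_UNIV
proof (intro conjI allI)
  show "F \<in> topspace (subtopology (product_topology (\<lambda>_. TR) UNIV) (unitri_carrier k)) \<rightarrow> unitri_carrier l"
    using maps_to TR by simp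
  fix p
  from entries[of p]
  show "continuous_map (subtopology (product_topology (\<lambda>_. TR) UNIV) (unitri_carrier k)) TR (\<lambda>A. F A p)"
  proof
    assume "\<exists>p'. \<forall>A. F A p = A p'"
    then obtain p' where "(\<lambda>A. F A p) = (\<lambda>A. A p')" by auto
    then show ?thesis
      by (metis continuous_map_from_subtopology continuous_map_product_projection UNIV_I)
  next
    assume "\<exists>c. \<forall>A. F A p = c"
    then obtain c where "(\<lambda>A. F A p) = (\<lambda>A. c)" by auto
    then show ?thesis using TR by simp
  qed
qed

definition unitri_pad :: "nat \<Rightarrow> (nat \<times> nat \<Rightarrow> 'r::comm_ring_1) \<Rightarrow> (nat \<times> nat \<Rightarrow> 'r)" where
  "unitri_pad m A = (\<lambda>(i, j). if i \<le> m \<and> j \<le> m then A (i, j) else if i = j \<and> i = Suc m then 1 else 0)"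

definition unitri_upper_block :: "nat \<Rightarrow> (nat \<times> nat \<Rightarrow> 'r::comm_ring_1) \<Rightarrow> (nat \<times> nat \<Rightarrow> 'r)" where
  "unitri_upper_block m A = (\<lambda>(i, j). if i \<le> m \<and> j \<le> m then A (i, j) else 0)"

definition unitri_lower_block :: "nat \<Rightarrow> (nat \<times> nat \<Rightarrow> 'r::comm_ring_1) \<Rightarrow> (nat \<times> nat \<Rightarrow> 'r)" where
  "unitri_lower_block m A = (\<lambda>(i, j). if i \<le> m \<and> j \<le> m then A (Suc i, Suc j) else 0)"

lemma unitri_pad_in_carrier: "A \<in> unitri_carrier m \<Longrightarrow> unitri_pad m A \<in> unitri_carrier (Suc m)"
  unfolding unitri_carrier_def unitri_pad_def by auto

lemma unitri_upper_block_in_carrier: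
  "A \<in> unitri_carrier (Suc m) \<Longrightarrow> unitri_upper_block m A \<in> unitri_carrier m"
  unfolding unitri_upper_block_def by (subst unitri_carrier_def) (auto simp: unitri_carrier_entry)

lemma unitri_lower_block_in_carrier:
  "A \<in> unitri_carrier (Suc m) \<Longrightarrow> unitri_lower_block m A \<in> unitri_carrier m"
  unfolding unitri_lower_block_def by (subst unitri_carrier_def) (auto simp: unitri_carrier_entry)

lemma unitri_pad_mult:
  "unitri_pad m (A \<otimes>\<^bsub>Unitri m\<^esub> B) = unitri_pad m A \<otimes>\<^bsub>Unitri (Suc m)\<^esub> unitri_pad m B"
proof (rule ext, clarify)
  fix i j
  consider "i \<le> m \<and> j \<le> m" | "i = Suc m \<and> j \<le> Suc m" | "i \<le> m \<and> j = Suc m"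
    | "\<not> (i \<le> Suc m \<and> j \<le> Suc m)" by linarith
  then show "unitri_pad m (A \<otimes>\<^bsub>Unitri m\<^esub> B) (i, j)
      = (unitri_pad m A \<otimes>\<^bsub>Unitri (Suc m)\<^esub> unitri_pad m B) (i, j)"
  proof cases
    case 2
    then have "(\<Sum>k\<le>Suc m. unitri_pad m A (Suc m, k) * unitri_pad m B (k, j))
        = (\<Sum>k\<le>Suc m. if k = Suc m then unitri_pad m B (Suc m, j) else 0)"
      by (intro sum.cong) (auto simp: unitri_pad_def)
    with 2 show ?thesis by (simp add: Unitri_mult_apply unitri_pad_def)
  next
    case 3
    then have "(\<Sum>k\<le>Suc m. unitri_pad m A (i, k) * unitri_pad m B (k, Suc m)) = 0"
      by (intro sum.neutral) (auto simp: unitri_pad_def)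
    with 3 show ?thesis by (simp add: Unitri_mult_apply unitri_pad_def)
  qed (auto simp: Unitri_mult_apply unitri_pad_def sum.atMost_Suc)
qed

lemma unitri_upper_block_mult:
  assumes B: "B \<in> unitri_carrier (Suc m)"
  shows "unitri_upper_block m (A \<otimes>\<^bsub>Unitri (Suc m)\<^esub> B) = unitri_upper_block m A \<otimes>\<^bsub>Unitri m\<^esub> unitri_upper_block m B"
proof (rule ext, clarify)
  fix i j
  show "unitri_upper_block m (A \<otimes>\<^bsub>Unitri (Suc m)\<^esub> B) (i, j)
      = (unitri_upper_block m A \<otimes>\<^bsub>Unitri m\<^esub> unitri_upper_block m B) (i, j)"
  proof (cases "i \<le> m \<and> j \<le> m")
    case True
    then have "B (Suc m, j) = 0"
      using B by (simp add: unitri_carrier_entry)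
    moreover have "(\<Sum>k\<le>m. unitri_upper_block m A (i, k) * unitri_upper_block m B (k, j))
        = (\<Sum>k\<le>m. A (i, k) * B (k, j))"
      by (intro sum.cong) (use True in \<open>auto simp: unitri_upper_block_def\<close>)
    ultimately show ?thesis
      using True by (simp add: Unitri_mult_apply unitri_upper_block_def sum.atMost_Suc)
  qed (auto simp: Unitri_mult_apply unitri_upper_block_def)
qed

lemma unitri_upper_block_hom: "unitri_upper_block m \<in> hom (Unitri (Suc m)) (Unitri m)"
  by (rule homI) (simp_all add: carrier_Unitri unitri_upper_block_in_carrier unitri_upper_block_mult)

lemma unitri_lower_block_mult:
  assumes A: "A \<in> unitri_carrier (Suc m)"
  shows "unitri_lower_block m (A \<otimes>\<^bsub>Unitri (Suc m)\<^esub> B) = unitri_lower_block m A \<otimes>\<^bsub>Unitri m\<^esub> unitri_lower_block m B"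
proof (rule ext, clarify)
  fix i j
  show "unitri_lower_block m (A \<otimes>\<^bsub>Unitri (Suc m)\<^esub> B) (i, j)
      = (unitri_lower_block m A \<otimes>\<^bsub>Unitri m\<^esub> unitri_lower_block m B) (i, j)"
  proof (cases "i \<le> m \<and> j \<le> m")
    case True
    then have "A (Suc i, 0) = 0"
      using A by (simp add: unitri_carrier_entry)
    moreover have "(\<Sum>k\<le>m. unitri_lower_block m A (i, k) * unitri_lower_block m B (k, j))
        = (\<Sum>k\<le>m. A (Suc i, Suc k) * B (Suc k, Suc j))"
      by (intro sum.cong) (use True in \<open>auto simp: unitri_lower_block_def\<close>)
    moreover have "(\<Sum>k\<le>Suc m. A (Suc i, k) * B (k, Suc j))
        = A (Suc i, 0) * B (0, Suc j) + (\<Sum>k\<le>m. A (Suc i, Suc k) * B (Suc k, Suc j))"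
      by (rule sum.atMost_Suc_shift)
    ultimately show ?thesis
      using True by (simp add: Unitri_mult_apply unitri_lower_block_def del: sum.atMost_Suc)
  qed (auto simp: Unitri_mult_apply unitri_lower_block_def)
qed

lemma unitri_lower_block_hom: "unitri_lower_block m \<in> hom (Unitri (Suc m)) (Unitri m)"
  by (rule homI) (simp_all add: carrier_Unitri unitri_lower_block_in_carrier unitri_lower_block_mult)

lemma continuous_map_unitri_pad:
  assumes "topspace TR = UNIV"
  shows "continuous_map (Unitri_top TR m) (Unitri_top TR (Suc m)) (unitri_pad m)"
proof (rule continuous_map_Unitri_top_entrywise[OF assms])
  fix p :: "nat \<times> nat"
  obtain i j where p: "p = (i, j)" by (cases p)
  show "(\<exists>p'. \<forall>A. unitri_pad m A p = A p') \<or> (\<exists>c. \<forall>A. unitri_pad m A p = (c :: 'a))"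
    by (cases "i \<le> m \<and> j \<le> m") (auto simp: unitri_pad_def p)
qed (simp add: unitri_pad_in_carrier)

lemma continuous_map_unitri_upper_block:
  assumes "topspace TR = UNIV"
  shows "continuous_map (Unitri_top TR (Suc m)) (Unitri_top TR m) (unitri_upper_block m)"
proof (rule continuous_map_Unitri_top_entrywise[OF assms])
  fix p :: "nat \<times> nat"
  obtain i j where p: "p = (i, j)" by (cases p)
  show "(\<exists>p'. \<forall>A. unitri_upper_block m A p = A p') \<or> (\<exists>c. \<forall>A. unitri_upper_block m A p = (c :: 'a))"
    by (cases "i \<le> m \<and> j \<le> m") (auto simp: unitri_upper_block_def p)
qed (simp add: unitri_upper_block_in_carrier)

lemma continuous_map_unitri_lower_block:
  assumes "topspace TR = UNIV"
  shows "continuous_map (Unitri_top TR (Suc m)) (Unitri_top TR m) (unitri_lower_block m)"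
proof (rule continuous_map_Unitri_top_entrywise[OF assms])
  fix p :: "nat \<times> nat"
  obtain i j where p: "p = (i, j)" by (cases p)
  show "(\<exists>p'. \<forall>A. unitri_lower_block m A p = A p') \<or> (\<exists>c. \<forall>A. unitri_lower_block m A p = (c :: 'a))"
  proof (cases "i \<le> m \<and> j \<le> m")
    case True
    then have "\<forall>A. unitri_lower_block m A p = A (Suc i, Suc j)"
      by (simp add: unitri_lower_block_def p)
    then show ?thesis by blast
  qed (auto simp: unitri_lower_block_def p)
qed (simp add: unitri_lower_block_in_carrier)

lemma unitri_blocks_corner_class:
  assumes "D \<in> corner_class (Suc m) A"
  shows "unitri_upper_block m D = unitri_upper_block m A"
    and "unitri_lower_block m D = unitri_lower_block m A"
  using assms by (auto simp: corner_class_def unitri_upper_block_def unitri_lower_block_def fun_eq_iff)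

lemma unitri_blocks_eq_one_imp_corner_class:
  assumes A: "A \<in> unitri_carrier (Suc m)"
    and upper: "unitri_upper_block m A = \<one>\<^bsub>Unitri m\<^esub>"
    and lower: "unitri_lower_block m A = \<one>\<^bsub>Unitri m\<^esub>"
  shows "A \<in> corner_class (Suc m) \<one>\<^bsub>Unitri (Suc m)\<^esub>"
  unfolding corner_class_def mem_Collect_eq
proof (intro allI impI)
  fix p :: "nat \<times> nat" assume p: "p \<noteq> (0, Suc m)"
  obtain i j where ij: "p = (i, j)" by (cases p)
  consider "\<not> (i < j \<and> j \<le> Suc m)" | "i < j" "j \<le> m" | "0 < i" "i < j" "j = Suc m"
    using p unfolding ij by fastforce
  then show "A p = \<one>\<^bsub>Unitri (Suc m)\<^esub> p"
  proof cases
    case 1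
    then show ?thesis using A by (simp add: ij unitri_carrier_entry Unitri_one_apply)
  next
    case 2
    then show ?thesis
      using fun_cong[OF upper, of "(i, j)"] by (simp add: ij unitri_upper_block_def Unitri_one_apply)
  next
    case 3
    then show ?thesis
      using fun_cong[OF lower, of "(i - 1, m)"] by (cases i) (simp_all add: ij unitri_lower_block_def Unitri_one_apply)
  qed
qed

section \<open>Homomorphisms to and from the quotient\<close>

text \<open>Evaluation at an arbitrary representative: meaningful only for maps that are constant
  on corner classes.\<close>

definition on_corner_classes :: "((nat \<times> nat \<Rightarrow> 'r) \<Rightarrow> 'x) \<Rightarrow> (nat \<times> nat \<Rightarrow> 'r) set \<Rightarrow> 'x" where
  "on_corner_classes P C = P (SOME A. A \<in> C)"

lemma on_corner_classes_corner_class: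
  assumes "\<And>A D. D \<in> corner_class n A \<Longrightarrow> P D = P A"
  shows "on_corner_classes P (corner_class n A) = P A"
  unfolding on_corner_classes_def using assms someI[of "\<lambda>D. D \<in> corner_class n A", OF corner_class_refl]
  by blast

lemma on_corner_classes_hom:
  fixes P :: "(nat \<times> nat \<Rightarrow> 'r::comm_ring_1) \<Rightarrow> 'x"
  assumes n: "0 < n" and P: "P \<in> hom (Unitri n) H"
    and invariant: "\<And>A D. D \<in> corner_class n A \<Longrightarrow> P D = P A"
  shows "on_corner_classes P \<in> hom (Unitri_bar n) H"
proof (rule homI)
  fix C :: "(nat \<times> nat \<Rightarrow> 'r) set" assume "C \<in> carrier (Unitri_bar n)"
  then obtain A where "A \<in> unitri_carrier n" "C = corner_class n A"
    by (auto simp: carrier_Unitri_bar[OF n])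
  then show "on_corner_classes P C \<in> carrier H"
    using hom_in_carrier[OF P] by (simp add: carrier_Unitri on_corner_classes_corner_class[OF invariant])
next
  fix C D :: "(nat \<times> nat \<Rightarrow> 'r) set"
  assume "C \<in> carrier (Unitri_bar n)" "D \<in> carrier (Unitri_bar n)"
  then obtain A B where "A \<in> unitri_carrier n" "C = corner_class n A"
    and "B \<in> unitri_carrier n" "D = corner_class n B"
    by (auto simp: carrier_Unitri_bar[OF n])
  then show "on_corner_classes P (C \<otimes>\<^bsub>Unitri_bar n\<^esub> D)
      = on_corner_classes P C \<otimes>\<^bsub>H\<^esub> on_corner_classes P D"
    using hom_mult[OF P]
    by (simp add: carrier_Unitri mult_Unitri_bar set_mult_corner_class[OF n] Unitri_mult_closed
        on_corner_classes_corner_class[OF invariant])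
qed

lemma continuous_map_on_corner_classes:
  assumes TR: "topspace TR = UNIV" and n: "0 < n"
    and P: "continuous_map (Unitri_top TR n) Z P"
    and invariant: "\<And>A D. D \<in> corner_class n A \<Longrightarrow> P D = P A"
  shows "continuous_map (Unitri_bar_top TR n) Z (on_corner_classes P)"
  unfolding Unitri_bar_top_def
  by (intro continuous_map_from_quotient_topology continuous_map_eq[OF P])
    (simp add: topspace_Unitri_top[OF TR] r_coset_central_sub[OF n] on_corner_classes_corner_class[OF invariant])

definition unitri_pad_bar :: "nat \<Rightarrow> (nat \<times> nat \<Rightarrow> 'r::comm_ring_1) \<Rightarrow> (nat \<times> nat \<Rightarrow> 'r) set" where
  "unitri_pad_bar m A = central_sub (Suc m) #>\<^bsub>Unitri (Suc m)\<^esub> unitri_pad m A"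

lemma unitri_pad_bar_eq:
  "A \<in> unitri_carrier m \<Longrightarrow> unitri_pad_bar m A = corner_class (Suc m) (unitri_pad m A)"
  by (simp add: unitri_pad_bar_def r_coset_central_sub unitri_pad_in_carrier)

lemma unitri_pad_bar_hom:
  "(unitri_pad_bar m :: (nat \<times> nat \<Rightarrow> 'r::comm_ring_1) \<Rightarrow> _) \<in> hom (Unitri m) (Unitri_bar (Suc m))"
proof (rule homI)
  fix A :: "nat \<times> nat \<Rightarrow> 'r" assume "A \<in> carrier (Unitri m)"
  then show "unitri_pad_bar m A \<in> carrier (Unitri_bar (Suc m))"
    by (simp add: carrier_Unitri carrier_Unitri_bar unitri_pad_bar_eq unitri_pad_in_carrier)
next
  fix A B :: "nat \<times> nat \<Rightarrow> 'r" assume "A \<in> carrier (Unitri m)" "B \<in> carrier (Unitri m)"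
  then show "unitri_pad_bar m (A \<otimes>\<^bsub>Unitri m\<^esub> B)
      = unitri_pad_bar m A \<otimes>\<^bsub>Unitri_bar (Suc m)\<^esub> unitri_pad_bar m B"
    by (simp add: carrier_Unitri unitri_pad_bar_eq Unitri_mult_closed unitri_pad_mult mult_Unitri_bar
        set_mult_corner_class unitri_pad_in_carrier)
qed

lemma continuous_map_unitri_pad_bar:
  assumes "topspace TR = UNIV"
  shows "continuous_map (Unitri_top TR m) (Unitri_bar_top TR (Suc m)) (unitri_pad_bar m)"
  unfolding Unitri_bar_top_def unitri_pad_bar_def
  using continuous_map_compose[OF continuous_map_unitri_pad[OF assms] continuous_map_to_quotient_topology]
  by (simp add: o_def)

lemma unitri_pad_bar_eq_one:
  assumes A: "A \<in> unitri_carrier m" and one: "unitri_pad_bar m A = \<one>\<^bsub>Unitri_bar (Suc m)\<^esub>"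
  shows "A = \<one>\<^bsub>Unitri m\<^esub>"
proof -
  have "unitri_pad m A \<in> corner_class (Suc m) \<one>\<^bsub>Unitri (Suc m)\<^esub>"
    using one corner_class_refl by (metis unitri_pad_bar_eq[OF A] one_Unitri_bar)
  then have pad_one: "unitri_pad m A (i, j) = \<one>\<^bsub>Unitri (Suc m)\<^esub> (i, j)" if "j \<le> m" for i j
    using that unfolding corner_class_def by simp
  have "A (i, j) = \<one>\<^bsub>Unitri m\<^esub> (i, j)" for i j
  proof (cases "i \<le> m \<and> j \<le> m")
    case True
    then show ?thesis
      using pad_one[of j i] by (simp add: unitri_pad_def Unitri_one_apply)
  next
    case False
    then show ?thesis
      by (subst unitri_carrier_entry[OF A]) (auto simp: Unitri_one_apply)
  qed
  then show ?thesis
    by auto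
qed

lemma on_corner_classes_unitri_blocks_hom:
  "on_corner_classes (unitri_upper_block m) \<in> hom (Unitri_bar (Suc m)) (Unitri m)"
  "on_corner_classes (unitri_lower_block m) \<in> hom (Unitri_bar (Suc m)) (Unitri m)"
  by (simp_all add: on_corner_classes_hom unitri_upper_block_hom unitri_lower_block_hom
      unitri_blocks_corner_class)

lemma continuous_map_on_corner_classes_unitri_blocks:
  assumes "topspace TR = UNIV"
  shows "continuous_map (Unitri_bar_top TR (Suc m)) (Unitri_top TR m) (on_corner_classes (unitri_upper_block m))"
    and "continuous_map (Unitri_bar_top TR (Suc m)) (Unitri_top TR m) (on_corner_classes (unitri_lower_block m))"
  by (simp_all add: assms continuous_map_on_corner_classes continuous_map_unitri_upper_block
      continuous_map_unitri_lower_block unitri_blocks_corner_class)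

lemma on_corner_classes_unitri_blocks_eq_one:
  assumes C: "C \<in> carrier (Unitri_bar (Suc m))"
    and upper: "on_corner_classes (unitri_upper_block m) C = \<one>\<^bsub>Unitri m\<^esub>"
    and lower: "on_corner_classes (unitri_lower_block m) C = \<one>\<^bsub>Unitri m\<^esub>"
  shows "C = \<one>\<^bsub>Unitri_bar (Suc m)\<^esub>"
proof -
  obtain A where A: "A \<in> unitri_carrier (Suc m)" and C_eq: "C = corner_class (Suc m) A"
    using C by (auto simp: carrier_Unitri_bar)
  have "A \<in> corner_class (Suc m) \<one>\<^bsub>Unitri (Suc m)\<^esub>"
    using upper lower unitri_blocks_eq_one_imp_corner_class[OF A]
    by (simp add: C_eq on_corner_classes_corner_class unitri_blocks_corner_class)
  then show ?thesis
    by (simp add: C_eq one_Unitri_bar corner_class_eq)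
qed

theorem lemma8p1:
  fixes n :: nat and TR :: "'r::comm_ring_1 topology"
    and G :: "('g, 'b) monoid_scheme" and TG :: "'g topology"
  assumes "n \<ge> 2"
    and "profinite_ring TR"
    and "profinite_group G TG"
  shows "T_kernel G TG (Unitri_bar n :: (nat \<times> nat \<Rightarrow> 'r) set monoid) (Unitri_bar_top TR n)
       = T_kernel G TG (Unitri (n - 1) :: (nat \<times> nat \<Rightarrow> 'r) monoid) (Unitri_top TR (n - 1))"
proof -
  obtain m where n: "n = Suc m"
    using assms(1) by (cases n) auto
  have TR: "topspace TR = UNIV"
    using assms(2) by (simp add: profinite_ring_def)
  have "T_kernel G TG (Unitri_bar (Suc m) :: (nat \<times> nat \<Rightarrow> 'r) set monoid) (Unitri_bar_top TR (Suc m))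
      \<subseteq> T_kernel G TG (Unitri m) (Unitri_top TR m)"
    by (rule T_kernel_subset_if_injective[OF unitri_pad_bar_hom continuous_map_unitri_pad_bar[OF TR]
          unitri_pad_bar_eq_one]) (simp add: carrier_Unitri)
  moreover have "T_kernel G TG (Unitri m :: (nat \<times> nat \<Rightarrow> 'r) monoid) (Unitri_top TR m)
      \<subseteq> T_kernel G TG (Unitri_bar (Suc m)) (Unitri_bar_top TR (Suc m))"
    by (rule T_kernel_subset_if_jointly_injective[OF on_corner_classes_unitri_blocks_hom
          continuous_map_on_corner_classes_unitri_blocks[OF TR]
          on_corner_classes_unitri_blocks_eq_one])
  ultimately show ?thesis
    unfolding n diff_Suc_1 by (rule equalityI)
qed

end
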